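(* Let $E$ be a closed set in $\mathbb{C}$. (1) $E$ satisfies condition $(U)_{1,\alpha}$ for some $\alpha>1$ if and only if there exist positive constants $A,C,r_0,\gamma$ and an increasing function $g_{1,\gamma}:(0,+\infty)\to(0,+\infty)$ with $g_{1,\gamma}(t)=\left(\log\frac{1}{Ct}\right)^{-\gamma}$ for $t\in(0,2r_0)$, such that $$\Lambda_{g_{1,\gamma}}\big(E\cap\overline{B}(a,r)\big)\ge A\,g_{1,\gamma}(2r)\quad\text{for every }a\in E,\ r\in(0,r_0).$$ (2) $E$ satisfies condition $(U)_{2,\beta}$ for some $\beta>0$ if and only if there exist positive constants $A,r_0,\eta$ and an increasing function $g_{2,\eta}:(0,+\infty)\to(0,+\infty)$ with $g_{2,\eta}(t)=\exp\!\left(-\eta\,\dfrac{\log(2/t)}{\log\log(4/t)}\right)$ for $t\in(0,2r_0)$, such that $$\Lambda_{g_{2,\eta}}\big(E\cap\overline{B}(a,r)\big)\ge A\,g_{2,\eta}(2r)\quad\text{for every }a\in E,\ r\in(0,r_0).$$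
   Context: For an increasing function $g:(0,\infty)\to(0,\infty)$ with $\lim_{t\to0}g(t)=0$ and a set $F\subset\mathbb{C}$, the $g$-Hausdorff content is $\Lambda_g(F)=\inf\{\sum_k g(\operatorname{diam}B_k)\}$, the infimum over all countable coverings $\{B_k\}$ of $F$ by closed discs. $\overline{B}(a,r)$ is the closed disc of center $a$ and radius $r$. For an increasing function $h$ on $[0,r_0)$ with $h(r)\le r$, a closed set $K\subset\mathbb{C}$ is $h$-uniformly perfect if $\{z\in\mathbb{C}: h(r)\le|z-a|\le r\}\cap K\neq\emptyset$ for every $a\in K$ and every $r\in(0,r_0)$. Let $h_{1,\alpha}(r)=r^\alpha$ ($\alpha>1$) and $h_{2,\beta}(r)=r(\log\frac1r)^{-\beta}$ ($\beta>0$). A closed set satisfies condition $(U)_{1,\alpha}$ (resp. $(U)_{2,\beta}$) if there exist constants $C>0$ and $r_0>0$ such that it is $Ch_{1,\alpha}$-uniformly perfect (resp. $Ch_{2,\beta}$-uniformly perfect) with that $r_0$. *)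

theory Defs
  imports "HOL-Analysis.Analysis"
begin

definition hausdorff_content :: "(real \<Rightarrow> real) \<Rightarrow> complex set \<Rightarrow> ennreal" where
  "hausdorff_content g F =
     (INF cr \<in> {(c :: nat \<Rightarrow> complex, \<rho> :: nat \<Rightarrow> real).
                  (\<forall>k. \<rho> k > 0) \<and> F \<subseteq> (\<Union>k. cball (c k) (\<rho> k))}.
        (\<Sum>k. ennreal (g (diameter (cball (fst cr k) (snd cr k))))))"

definition h_uniformly_perfect :: "(real \<Rightarrow> real) \<Rightarrow> real \<Rightarrow> complex set \<Rightarrow> bool" where
  "h_uniformly_perfect h r0 K \<longleftrightarrow>
     closed K \<and> mono_on {0..<r0} h \<and> (\<forall>r\<in>{0..<r0}. h r \<le> r) \<and>
     (\<forall>a\<in>K. \<forall>r\<in>{0<..<r0}. {z. h r \<le> cmod (z - a) \<and> cmod (z - a) \<le> r} \<inter> K \<noteq> {})"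

definition h1 :: "real \<Rightarrow> real \<Rightarrow> real" where
  "h1 \<alpha> r = r powr \<alpha>"

definition h2 :: "real \<Rightarrow> real \<Rightarrow> real" where
  "h2 \<beta> r = r * (ln (1 / r)) powr (- \<beta>)"

definition condU1 :: "real \<Rightarrow> complex set \<Rightarrow> bool" where
  "condU1 \<alpha> K \<longleftrightarrow> (\<exists>C>0. \<exists>r0>0. h_uniformly_perfect (\<lambda>r. C * h1 \<alpha> r) r0 K)"

definition condU2 :: "real \<Rightarrow> complex set \<Rightarrow> bool" where
  "condU2 \<beta> K \<longleftrightarrow> (\<exists>C>0. \<exists>r0>0. h_uniformly_perfect (\<lambda>r. C * h2 \<beta> r) r0 K)"

definition gauge_fun :: "(real \<Rightarrow> real) \<Rightarrow> bool" where
  "gauge_fun g \<longleftrightarrow> mono_on {0<..} g \<and> (\<forall>t>0. g t > 0) \<and> (g \<longlongrightarrow> 0) (at_right 0)"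

end

theory Submission
  imports Defs "HOL-Real_Asymp.Real_Asymp"
begin

text \<open>If \<open>E\<close> is \<open>h\<close>-uniformly perfect, every disc \<open>E \<inter> B(a,r)\<close> contains two points of \<open>E\<close>
  at distance at least \<open>h(r/2)\<close>; iterating gives a Cantor-type tree, and a finite cover of
  \<open>E \<inter> B(a,r)\<close> either contains a disc of radius at least \<open>h(r/2)/6\<close> or splits into disjoint
  covers of the two subdiscs of radius \<open>h(r/2)/3\<close>. When \<open>g(2r) \<le> 2 g(h(r/2)/3)\<close> and \<open>g\<close> is
  doubling, induction on the depth yields \<open>\<Lambda>\<^sub>g(E \<inter> B(a,r)) \<ge> c g(2r)\<close>. Conversely, if the annulus
  \<open>h(r) \<le> |z - a| \<le> r\<close> misses \<open>E\<close>, then \<open>E \<inter> B(a,r) \<subseteq> B(a,h(r))\<close> has content at most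
  \<open>g(2h(r))\<close>, contradicting the lower bound whenever \<open>g(2h(r)) < A g(2r)\<close>.
  For the two pairs of \<open>h\<close> and \<open>g\<close> in the theorem both conditions are elementary estimates,
  with \<open>\<gamma> = log 2 / log (\<alpha> + 1)\<close> and \<open>\<eta> = log 2 / (1 + \<beta>)\<close> in one direction and
  \<open>\<alpha>\<close>, \<open>\<beta>\<close> large in the other.\<close>

lemma ln_div_ge_iff_le_exp:
  fixes c t K :: real
  assumes "0 < c" "0 < t"
  shows "K \<le> ln (c / t) \<longleftrightarrow> t \<le> c * exp (- K)"
  using assms by (simp add: ln_ge_iff field_simps exp_minus)

lemma powr_neg_mult_le:
  fixes x q u \<gamma> :: real
  assumes "0 < x" "x \<le> q * u" "0 \<le> q" "0 \<le> u" "0 \<le> \<gamma>"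
  shows "q powr (- \<gamma>) * u powr (- \<gamma>) \<le> x powr (- \<gamma>)"
  using powr_mono2'[of "- \<gamma>" x "q * u"] assms by (simp add: powr_mult)

lemma powr_neg_le_mult:
  fixes x q u \<gamma> :: real
  assumes "0 < q * u" "q * u \<le> x" "0 \<le> q" "0 \<le> u" "0 \<le> \<gamma>"
  shows "x powr (- \<gamma>) \<le> q powr (- \<gamma>) * u powr (- \<gamma>)"
  using powr_mono2'[of "- \<gamma>" "q * u" x] assms by (simp add: powr_mult)

lemma gauge_fun_pos: "gauge_fun g \<Longrightarrow> 0 < t \<Longrightarrow> 0 < g t"
  unfolding gauge_fun_def by blast

lemma gauge_fun_mono: "gauge_fun g \<Longrightarrow> 0 < x \<Longrightarrow> x \<le> y \<Longrightarrow> g x \<le> g y"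
  unfolding gauge_fun_def by (auto intro: mono_onD)

lemma gauge_fun_small:
  assumes "gauge_fun g" "0 < e"
  obtains t where "0 < t" "g (2 * t) \<le> e"
proof -
  have "(g \<longlongrightarrow> 0) (at_right 0)" using assms(1) unfolding gauge_fun_def by blast
  then have "eventually (\<lambda>t. g t < e) (at_right 0)" using assms(2) by (rule order_tendstoD)
  then obtain b where "0 < b" "\<And>t. 0 < t \<Longrightarrow> t < b \<Longrightarrow> g t < e"
    unfolding eventually_at_right_field by blast
  then have "g (b / 2) < e" by simp
  with \<open>0 < b\<close> that[of "b / 4"] show thesis by simp
qed

lemma hausdorff_content_le_of_subset_cball:
  assumes g: "gauge_fun g" and s: "0 < s" and S: "S \<subseteq> cball a s"
  shows "hausdorff_content g S \<le> ennreal (g (2 * s))"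
proof (rule ennreal_le_epsilon)
  fix e :: real assume e: "0 < e"
  have "\<forall>k::nat. \<exists>t>0. g (2 * t) \<le> e / 2 * (1/2) ^ k"
  proof
    fix k :: nat
    obtain t where "0 < t" "g (2 * t) \<le> e / 2 * (1/2) ^ k"
      using gauge_fun_small[OF g, of "e / 2 * (1/2) ^ k"] e by auto
    then show "\<exists>t>0. g (2 * t) \<le> e / 2 * (1/2) ^ k" by blast
  qed
  then obtain t where t: "\<And>k. 0 < t k" "\<And>k. g (2 * t k) \<le> e / 2 * (1/2) ^ k"
    by metis
  define \<rho> where "\<rho> k = (if k = 0 then s else t k)" for k :: nat
  define b where "b k = (if k = 0 then g (2 * s) else 0) + e / 2 * (1/2) ^ k" for k :: nat
  have \<rho>_pos: "0 < \<rho> k" for k using s t(1) by (simp add: \<rho>_def)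
  have "b sums (g (2 * s) + e / 2 * (1 / (1 - 1/2)))"
    unfolding b_def by (intro sums_add sums_single sums_mult geometric_sums) simp
  then have b_sums: "b sums (g (2 * s) + e)" by simp
  have "((\<lambda>_. a), \<rho>) \<in> {(c, \<rho>). (\<forall>k. 0 < \<rho> k) \<and> S \<subseteq> (\<Union>k. cball (c k) (\<rho> k))}"
  proof -
    have "S \<subseteq> cball a (\<rho> 0)" using S by (simp add: \<rho>_def)
    then show ?thesis using \<rho>_pos by blast
  qed
  then have "hausdorff_content g S \<le> (\<Sum>k. ennreal (g (diameter (cball a (\<rho> k)))))"
    unfolding hausdorff_content_def by (rule INF_lower2) simp
  also have "\<dots> = (\<Sum>k. ennreal (g (2 * \<rho> k)))"
  proof -
    have "diameter (cball a (\<rho> k)) = 2 * \<rho> k" for k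
      using \<rho>_pos[of k] by (simp add: diameter_cball)
    then show ?thesis by simp
  qed
  also have "\<dots> \<le> (\<Sum>k. ennreal (b k))"
    using e t(2) by (intro suminf_le ennreal_leI) (auto simp: \<rho>_def b_def)
  also have "\<dots> = ennreal (g (2 * s) + e)"
    using b_sums gauge_fun_pos[OF g, of "2 * s"] s e
    by (subst suminf_ennreal2) (auto simp: b_def sums_iff)
  finally show "hausdorff_content g S \<le> ennreal (g (2 * s)) + ennreal e"
    using gauge_fun_pos[OF g, of "2 * s"] s e by (simp add: ennreal_plus)
qed

section \<open>Uniformly perfect sets have large Hausdorff content\<close>

lemma h_uniformly_perfect_smaller_radius:
  "h_uniformly_perfect h r0 K \<Longrightarrow> R \<le> r0 \<Longrightarrow> h_uniformly_perfect h R K"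
  unfolding h_uniformly_perfect_def by (auto intro: mono_on_subset)

lemma h_uniformly_perfectD:
  assumes "h_uniformly_perfect h R K" "a \<in> K" "0 < s" "s < R"
  obtains z where "z \<in> K" "h s \<le> dist z a" "dist z a \<le> s"
  using assms unfolding h_uniformly_perfect_def by (fastforce simp: dist_norm)

lemma radius_ge_if_cball_meets_both:
  fixes a y p z1 z2 :: "'a :: metric_space"
  assumes "H \<le> dist y a" "z1 \<in> cball a (H/3)" "z2 \<in> cball y (H/3)"
    "z1 \<in> cball p \<rho>" "z2 \<in> cball p \<rho>"
  shows "H/6 \<le> \<rho>"
  using assms dist_triangle[of y a z1] dist_triangle[of z1 y p] dist_triangle[of p y z2]
  by (simp add: dist_commute)

lemma cball_cover_restrict:
  assumes "S \<inter> cball a r \<subseteq> (\<Union>k\<in>K. cball (c k) (\<rho> k))" "cball b s \<subseteq> cball a r"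
  shows "S \<inter> cball b s \<subseteq> (\<Union>k\<in>{k\<in>K. cball (c k) (\<rho> k) \<inter> cball b s \<noteq> {}}. cball (c k) (\<rho> k))"
  using assms by blast

text \<open>Induction on the depth \<open>n\<close>: each step passes from radius \<open>r\<close> to \<open>h(r/2)/3 \<le> r/6\<close>,
  and once \<open>r < \<rho>0\<close> the disc covering the centre already has radius at least \<open>h(r/2)/6\<close>.\<close>
lemma uniformly_perfect_cover_bound_induct:
  fixes E :: "complex set" and c :: "'i \<Rightarrow> complex"
  assumes perf: "h_uniformly_perfect h R E" and h_pos: "\<And>s. 0 < s \<Longrightarrow> s < R \<Longrightarrow> 0 < h s"
    and g: "gauge_fun g"
    and scale: "\<And>r. 0 < r \<Longrightarrow> r < R \<Longrightarrow> g (2 * r) \<le> 2 * g (h (r/2) / 3)"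
    and \<rho>0: "0 < \<rho>0"
    and cover: "a \<in> E" "0 < r" "r < R" "r < 2 ^ n * \<rho>0" "finite K" "\<forall>k\<in>K. \<rho>0 \<le> \<rho> k"
      "E \<inter> cball a r \<subseteq> (\<Union>k\<in>K. cball (c k) (\<rho> k))"
  shows "g (2 * r) \<le> 2 * (\<Sum>k\<in>K. g (2 * \<rho> k))"
proof -
  have h_le: "h s \<le> s" if "0 < s" "s < R" for s
    using perf that unfolding h_uniformly_perfect_def by auto
  have one_disc: "g (2 * r) \<le> 2 * (\<Sum>k\<in>K. g (2 * \<rho> k))"
    if "0 < r" "r < R" "finite K" "\<forall>k\<in>K. \<rho>0 \<le> \<rho> k" "k \<in> K" "h (r/2) / 6 \<le> \<rho> k" for r K k
  proof -
    have "g (2 * r) \<le> 2 * g (2 * (h (r/2) / 6))" using scale that(1,2) by simp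
    also have "\<dots> \<le> 2 * g (2 * \<rho> k)"
      using that h_pos[of "r/2"] by (auto intro: gauge_fun_mono[OF g])
    also have "\<dots> \<le> 2 * (\<Sum>k\<in>K. g (2 * \<rho> k))"
      using that \<rho>0 by (auto intro!: member_le_sum less_imp_le[OF gauge_fun_pos[OF g]])
    finally show ?thesis .
  qed
  show ?thesis
    using cover
  proof (induction n arbitrary: a r K)
    case 0
    have "a \<in> E \<inter> cball a r" using "0.prems"(1,2) by simp
    then obtain k where "k \<in> K" "a \<in> cball (c k) (\<rho> k)" using "0.prems"(7) by blast
    moreover have "h (r/2) / 6 \<le> \<rho> k"
      using 0 h_le[of "r/2"] \<open>k \<in> K\<close> by fastforce
    ultimately show ?case using 0 one_disc by blast
  next
    case (Suc n)
    define H where "H = h (r/2)"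
    have H: "0 < H" "H \<le> r/2"
      using Suc.prems(2,3) h_pos[of "r/2"] h_le[of "r/2"] by (auto simp: H_def)
    obtain y where y: "y \<in> E" "H \<le> dist y a" "dist y a \<le> r/2"
      using h_uniformly_perfectD[OF perf Suc.prems(1), of "r/2"] Suc.prems(2,3)
      unfolding H_def by auto
    define K1 where "K1 = {k\<in>K. cball (c k) (\<rho> k) \<inter> cball a (H/3) \<noteq> {}}"
    define K2 where "K2 = {k\<in>K. cball (c k) (\<rho> k) \<inter> cball y (H/3) \<noteq> {}}"
    show ?case
    proof (cases "K1 \<inter> K2 = {}")
      case False
      then obtain k z1 z2 where "k \<in> K" "z1 \<in> cball a (H/3)" "z2 \<in> cball y (H/3)"
        "z1 \<in> cball (c k) (\<rho> k)" "z2 \<in> cball (c k) (\<rho> k)" unfolding K1_def K2_def by blast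
      then show ?thesis
        using radius_ge_if_cball_meets_both[OF y(2)] Suc.prems one_disc unfolding H_def by blast
    next
      case True
      have small: "0 < H/3" "H/3 < R" "H/3 < 2 ^ n * \<rho>0" using H Suc.prems(3,4) by auto
      have "cball y (H/3) \<subseteq> cball a r"
      proof
        fix x assume "x \<in> cball y (H/3)"
        then show "x \<in> cball a r" using H y(3) dist_triangle[of a x y] by (simp add: dist_commute)
      qed
      then have cov2: "E \<inter> cball y (H/3) \<subseteq> (\<Union>k\<in>K2. cball (c k) (\<rho> k))"
        unfolding K2_def by (rule cball_cover_restrict[OF Suc.prems(7)])
      have "cball a (H/3) \<subseteq> cball a r" using H by (simp add: subset_cball)
      then have cov1: "E \<inter> cball a (H/3) \<subseteq> (\<Union>k\<in>K1. cball (c k) (\<rho> k))"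
        unfolding K1_def by (rule cball_cover_restrict[OF Suc.prems(7)])
      have fin: "finite K1" "finite K2" and bd: "\<forall>k\<in>K1. \<rho>0 \<le> \<rho> k" "\<forall>k\<in>K2. \<rho>0 \<le> \<rho> k"
        using Suc.prems(5,6) by (auto simp: K1_def K2_def)
      have "g (2 * (H/3)) \<le> 2 * (\<Sum>k\<in>K1. g (2 * \<rho> k))"
        by (rule Suc.IH[OF Suc.prems(1) small fin(1) bd(1) cov1])
      moreover have "g (2 * (H/3)) \<le> 2 * (\<Sum>k\<in>K2. g (2 * \<rho> k))"
        by (rule Suc.IH[OF y(1) small fin(2) bd(2) cov2])
      ultimately have "g (H/3) \<le> (\<Sum>k\<in>K1 \<union> K2. g (2 * \<rho> k))"
        using True fin H gauge_fun_mono[OF g, of "H/3" "2 * (H/3)"]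
        by (simp add: sum.union_disjoint)
      also have "\<dots> \<le> (\<Sum>k\<in>K. g (2 * \<rho> k))"
        using Suc.prems(5,6) \<rho>0 by (intro sum_mono2)
          (auto simp: K1_def K2_def intro!: less_imp_le[OF gauge_fun_pos[OF g]])
      finally show ?thesis using scale[of r] Suc.prems(2,3) by (simp add: H_def)
    qed
  qed
qed

lemma uniformly_perfect_finite_cover_bound:
  fixes E :: "complex set" and c :: "'i \<Rightarrow> complex"
  assumes perf: "h_uniformly_perfect h R E" and h_pos: "\<And>s. 0 < s \<Longrightarrow> s < R \<Longrightarrow> 0 < h s"
    and g: "gauge_fun g"
    and scale: "\<And>r. 0 < r \<Longrightarrow> r < R \<Longrightarrow> g (2 * r) \<le> 2 * g (h (r/2) / 3)"
    and a: "a \<in> E" and r: "0 < r" "r < R"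
    and K: "finite K" "\<And>k. k \<in> K \<Longrightarrow> 0 < \<rho> k"
    and cover: "E \<inter> cball a r \<subseteq> (\<Union>k\<in>K. cball (c k) (\<rho> k))"
  shows "g (2 * r) \<le> 2 * (\<Sum>k\<in>K. g (2 * \<rho> k))"
proof -
  have "a \<in> E \<inter> cball a r" using a r by simp
  with cover have "a \<in> (\<Union>k\<in>K. cball (c k) (\<rho> k))" by (rule subsetD)
  then have "K \<noteq> {}" by blast
  define \<rho>0 where "\<rho>0 = Min (\<rho> ` K)"
  have "\<rho>0 \<in> \<rho> ` K" unfolding \<rho>0_def using K \<open>K \<noteq> {}\<close> by (intro Min_in) auto
  then have \<rho>0: "0 < \<rho>0" using K(2) by blast
  obtain n where "r / \<rho>0 < 2 ^ n" using real_arch_pow[of 2 "r / \<rho>0"] by auto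
  then have n: "r < 2 ^ n * \<rho>0" using \<rho>0 by (simp add: divide_less_eq)
  have \<rho>0_le: "\<forall>k\<in>K. \<rho>0 \<le> \<rho> k" unfolding \<rho>0_def using K(1) by simp
  show ?thesis
    by (rule uniformly_perfect_cover_bound_induct[OF perf h_pos g scale \<rho>0 a r n K(1) \<rho>0_le cover])
qed

lemma compact_finite_subcover_doubled_cballs:
  fixes c :: "nat \<Rightarrow> 'a :: metric_space"
  assumes "compact S" "S \<subseteq> (\<Union>k. cball (c k) (\<rho> k))" "\<And>k. 0 < \<rho> k"
  obtains K where "finite K" "S \<subseteq> (\<Union>k\<in>K. cball (c k) (2 * \<rho> k))"
proof -
  have "cball (c k) (\<rho> k) \<subseteq> ball (c k) (2 * \<rho> k)" for k
    using assms(3)[of k] by (simp add: subset_eq)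
  then have "S \<subseteq> (\<Union>k. ball (c k) (2 * \<rho> k))" using assms(2) by (meson UN_mono order_trans subset_UNIV)
  then obtain K where K: "finite K" "S \<subseteq> (\<Union>k\<in>K. ball (c k) (2 * \<rho> k))"
    by (rule compactE_image[OF assms(1) open_ball]) blast
  have "(\<Union>k\<in>K. ball (c k) (2 * \<rho> k)) \<subseteq> (\<Union>k\<in>K. cball (c k) (2 * \<rho> k))"
    by (intro UN_mono order_refl ball_subset_cball)
  then show thesis using that[OF K(1) order_trans[OF K(2)]] by blast
qed

text \<open>Compactness turns a countable cover into a finite one at the price of doubling the radii,
  which the doubling condition on \<open>g\<close> pays for.\<close>
lemma uniformly_perfect_cover_sum_ge:
  fixes E :: "complex set" and c :: "nat \<Rightarrow> complex"
  assumes "closed E" and perf: "h_uniformly_perfect h R E"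
    and h_pos: "\<And>s. 0 < s \<Longrightarrow> s < R \<Longrightarrow> 0 < h s"
    and g: "gauge_fun g"
    and scale: "\<And>r. 0 < r \<Longrightarrow> r < R \<Longrightarrow> g (2 * r) \<le> 2 * g (h (r/2) / 3)"
    and doubling: "\<And>t. 0 < t \<Longrightarrow> t < 2 * R \<Longrightarrow> g (2 * t) \<le> M * g t" and M: "1 \<le> M"
    and a: "a \<in> E" and r: "0 < r" "r < R"
    and \<rho>: "\<And>k. 0 < \<rho> k" and \<rho>_lt: "\<And>k. \<rho> k < r"
    and cover: "E \<inter> cball a r \<subseteq> (\<Union>k. cball (c k) (\<rho> k))"
  shows "ennreal (g (2 * r) / (2 * M)) \<le> (\<Sum>k. ennreal (g (2 * \<rho> k)))"
proof -
  have "compact (E \<inter> cball a r)" using \<open>closed E\<close> by (intro closed_Int_compact) auto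
  then obtain K where K: "finite K" "E \<inter> cball a r \<subseteq> (\<Union>k\<in>K. cball (c k) (2 * \<rho> k))"
    using compact_finite_subcover_doubled_cballs cover \<rho> by metis
  have "g (2 * r) \<le> 2 * (\<Sum>k\<in>K. g (2 * (2 * \<rho> k)))"
    using uniformly_perfect_finite_cover_bound[OF perf h_pos g scale a r K(1) _ K(2)] \<rho> by simp
  also have "\<dots> \<le> 2 * (\<Sum>k\<in>K. M * g (2 * \<rho> k))"
  proof (intro mult_left_mono sum_mono)
    show "g (2 * (2 * \<rho> k)) \<le> M * g (2 * \<rho> k)" for k
      using doubling[of "2 * \<rho> k"] \<rho>[of k] \<rho>_lt[of k] r by simp
  qed simp
  also have "\<dots> = (2 * M) * (\<Sum>k\<in>K. g (2 * \<rho> k))" by (simp add: sum_distrib_left mult.assoc)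
  finally have "g (2 * r) / (2 * M) \<le> (\<Sum>k\<in>K. g (2 * \<rho> k))"
    using M by (simp add: divide_le_eq mult.commute)
  then have "ennreal (g (2 * r) / (2 * M)) \<le> ennreal (\<Sum>k\<in>K. g (2 * \<rho> k))"
    by (rule ennreal_leI)
  also have "\<dots> = (\<Sum>k\<in>K. ennreal (g (2 * \<rho> k)))"
    using gauge_fun_pos[OF g] \<rho> by (subst sum_ennreal) (auto intro: less_imp_le)
  also have "\<dots> \<le> (\<Sum>k. ennreal (g (2 * \<rho> k)))" using K(1) by (intro sum_le_suminf) auto
  finally show ?thesis .
qed

lemma uniformly_perfect_imp_hausdorff_content_ge:
  fixes E :: "complex set"
  assumes "closed E" and perf: "h_uniformly_perfect h R E"
    and h_pos: "\<And>s. 0 < s \<Longrightarrow> s < R \<Longrightarrow> 0 < h s"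
    and g: "gauge_fun g"
    and scale: "\<And>r. 0 < r \<Longrightarrow> r < R \<Longrightarrow> g (2 * r) \<le> 2 * g (h (r/2) / 3)"
    and doubling: "\<And>t. 0 < t \<Longrightarrow> t < 2 * R \<Longrightarrow> g (2 * t) \<le> M * g t"
    and a: "a \<in> E" and r: "0 < r" "r < R"
  shows "ennreal (g (2 * r) / (2 * M)) \<le> hausdorff_content g (E \<inter> cball a r)"
  unfolding hausdorff_content_def
proof (rule INF_greatest, clarify)
  fix c :: "nat \<Rightarrow> complex" and \<rho> :: "nat \<Rightarrow> real"
  assume \<rho>: "\<forall>k. 0 < \<rho> k" and cover: "E \<inter> cball a r \<subseteq> (\<Union>k. cball (c k) (\<rho> k))"
  have "g r \<le> g (2 * r)" using r by (intro gauge_fun_mono[OF g]) auto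
  also have "\<dots> \<le> M * g r" using doubling r by simp
  finally have M: "1 \<le> M" using gauge_fun_pos[OF g r(1)] by simp
  have "ennreal (g (2 * r) / (2 * M)) \<le> (\<Sum>k. ennreal (g (2 * \<rho> k)))"
  proof (cases "\<exists>k. r \<le> \<rho> k")
    case True
    then obtain k where k: "r \<le> \<rho> k" by blast
    have "g (2 * r) / (2 * M) \<le> g (2 * r) / 1"
      using M gauge_fun_pos[OF g, of "2 * r"] r by (intro divide_left_mono) auto
    also have "\<dots> \<le> g (2 * \<rho> k)" using r k by (simp add: gauge_fun_mono[OF g])
    finally have "ennreal (g (2 * r) / (2 * M)) \<le> ennreal (g (2 * \<rho> k))" by (rule ennreal_leI)
    also have "\<dots> \<le> (\<Sum>k. ennreal (g (2 * \<rho> k)))"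
      using sum_le_suminf[of "\<lambda>k. ennreal (g (2 * \<rho> k))" "{k}"] by simp
    finally show ?thesis .
  next
    case False
    then show ?thesis
      using uniformly_perfect_cover_sum_ge[OF \<open>closed E\<close> perf h_pos g scale doubling M a r _ _ cover] \<rho>
      by (simp add: not_le)
  qed
  moreover have "diameter (cball (c k) (\<rho> k)) = 2 * \<rho> k" for k
    using \<rho>[rule_format, of k] by (simp add: diameter_cball)
  ultimately show "ennreal (g (2 * r) / (2 * M))
      \<le> (\<Sum>k. ennreal (g (diameter (cball (fst (c, \<rho>) k) (snd (c, \<rho>) k)))))"
    by (simp only: fst_conv snd_conv)
qed

section \<open>Large Hausdorff content forces uniform perfectness\<close>

lemma annulus_disjoint_imp_subset_cball:
  fixes E :: "complex set"
  assumes "{z. s \<le> cmod (z - a) \<and> cmod (z - a) \<le> r} \<inter> E = {}"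
  shows "E \<inter> cball a r \<subseteq> cball a s"
proof
  fix z assume "z \<in> E \<inter> cball a r"
  then have "z \<in> E" "cmod (z - a) \<le> r" by (auto simp: dist_complex_def norm_minus_commute)
  then have "\<not> s \<le> cmod (z - a)" using assms by blast
  then show "z \<in> cball a s" by (simp add: dist_complex_def norm_minus_commute)
qed

lemma hausdorff_content_ge_imp_uniformly_perfect:
  fixes E :: "complex set"
  assumes "closed E" and g: "gauge_fun g"
    and bound: "\<And>a r. a \<in> E \<Longrightarrow> 0 < r \<Longrightarrow> r < R \<Longrightarrow>
      ennreal (A * g (2 * r)) \<le> hausdorff_content g (E \<inter> cball a r)"
    and h_mono: "mono_on {0..<R} h" and h_le: "\<And>r. 0 \<le> r \<Longrightarrow> r < R \<Longrightarrow> h r \<le> r"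
    and gap: "\<And>r. 0 < r \<Longrightarrow> r < R \<Longrightarrow> g (2 * h r) < A * g (2 * r)"
  shows "h_uniformly_perfect h R E"
  unfolding h_uniformly_perfect_def
proof (intro conjI ballI h_mono h_le \<open>closed E\<close>)
  fix a r assume a: "a \<in> E" and r: "r \<in> {0<..<R}"
  show "{z. h r \<le> cmod (z - a) \<and> cmod (z - a) \<le> r} \<inter> E \<noteq> {}"
  proof (cases "0 < h r")
    case True
    show ?thesis
    proof
      assume "{z. h r \<le> cmod (z - a) \<and> cmod (z - a) \<le> r} \<inter> E = {}"
      then have "E \<inter> cball a r \<subseteq> cball a (h r)" by (rule annulus_disjoint_imp_subset_cball)
      then have "hausdorff_content g (E \<inter> cball a r) \<le> ennreal (g (2 * h r))"
        using hausdorff_content_le_of_subset_cball[OF g True] by blast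
      then have "ennreal (A * g (2 * r)) \<le> ennreal (g (2 * h r))"
        using bound[OF a] r by (auto intro: order_trans)
      then have "A * g (2 * r) \<le> g (2 * h r)"
        using gauge_fun_pos[OF g, of "2 * h r"] True by (simp add: ennreal_le_iff)
      then show False using gap r by force
    qed
  next
    case False
    then have "a \<in> {z. h r \<le> cmod (z - a) \<and> cmod (z - a) \<le> r} \<inter> E" using a r by auto
    then show ?thesis by blast
  qed
qed (auto simp: atLeastLessThan_iff)

section \<open>The gauge \<open>ln (2/t) powr (- \<gamma>)\<close>\<close>

text \<open>The truncation at \<open>1/2\<close> makes the gauge admissible on all of \<open>(0, \<infinity>)\<close>;
  only its values near \<open>0\<close> enter the theorem.\<close>
definition log_gauge :: "real \<Rightarrow> real \<Rightarrow> real" where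
  "log_gauge \<gamma> t = ln (2 / min t (1/2)) powr (- \<gamma>)"

lemma log_gauge_eq: "0 < t \<Longrightarrow> t \<le> 1/2 \<Longrightarrow> log_gauge \<gamma> t = ln (2 / t) powr (- \<gamma>)"
  by (simp add: log_gauge_def min_def)

lemma gauge_fun_log_gauge:
  assumes "0 < \<gamma>"
  shows "gauge_fun (log_gauge \<gamma>)"
proof -
  have ln_pos: "0 < ln (2 / min t (1/2))" if "0 < t" for t :: real
    using that by (intro ln_gt_zero) (auto simp: min_def field_simps)
  show ?thesis
    unfolding gauge_fun_def
  proof (intro conjI allI impI mono_onI)
    fix x y :: real assume "x \<in> {0<..}" "x \<le> y"
    then have "ln (2 / min y (1/2)) \<le> ln (2 / min x (1/2))"
      by (subst ln_le_cancel_iff) (auto intro!: divide_left_mono)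
    then show "log_gauge \<gamma> x \<le> log_gauge \<gamma> y"
      unfolding log_gauge_def using ln_pos[of y] \<open>x \<in> {0<..}\<close> \<open>x \<le> y\<close> assms
      by (intro powr_mono2') auto
  next
    fix t :: real assume "0 < t"
    then show "0 < log_gauge \<gamma> t"
      using ln_pos[of t] by (simp add: log_gauge_def)
  next
    have "filterlim (\<lambda>t::real. ln (2 / t)) at_top (at_right 0)" by real_asymp
    then have "((\<lambda>t. ln (2 / t) powr (- \<gamma>)) \<longlongrightarrow> 0) (at_right 0)"
      using assms by (intro tendsto_neg_powr) auto
    moreover have "eventually (\<lambda>t::real. t < 1/2) (at_right 0)"
      unfolding eventually_at_right_field by (intro exI[of _ "1/2"]) auto
    with eventually_at_right_less[of "0::real"]
    have "eventually (\<lambda>t. ln (2 / t) powr (- \<gamma>) = log_gauge \<gamma> t) (at_right 0)"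
      by eventually_elim (simp add: log_gauge_eq)
    ultimately show "(log_gauge \<gamma> \<longlongrightarrow> 0) (at_right 0)"
      by (rule Lim_transform_eventually)
  qed
qed

lemma log_gauge_doubling:
  assumes "0 \<le> \<gamma>" "0 < t" "t \<le> 1/4"
  shows "log_gauge \<gamma> (2 * t) \<le> 2 powr \<gamma> * log_gauge \<gamma> t"
proof -
  have "ln 4 \<le> ln (1 / t)" using assms by (subst ln_le_cancel_iff) (auto simp: field_simps)
  then have "ln 2 \<le> ln (1 / t)" using ln_le_cancel_iff[of 2 4] by linarith
  then have "ln (2 / t) \<le> 2 * ln (1 / t)" using assms(2) by (simp add: ln_div)
  moreover have "0 < ln (2 / t)" using assms by (intro ln_gt_zero) (auto simp: field_simps)
  ultimately have "2 powr (- \<gamma>) * ln (1 / t) powr (- \<gamma>) \<le> ln (2 / t) powr (- \<gamma>)"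
    using assms(1) by (intro powr_neg_mult_le) auto
  then have "2 powr \<gamma> * (2 powr (- \<gamma>) * ln (1 / t) powr (- \<gamma>)) \<le> 2 powr \<gamma> * ln (2 / t) powr (- \<gamma>)"
    by (rule mult_left_mono) simp
  then show ?thesis
    using assms by (simp add: log_gauge_eq powr_minus field_simps)
qed

text \<open>The exponent \<open>\<gamma>\<close> with \<open>(\<alpha> + 1) powr \<gamma> = 2\<close> is what turns the loss
  \<open>ln (1/r) \<mapsto> (\<alpha> + 1) ln (1/r)\<close> caused by \<open>h1 \<alpha>\<close> into the factor 2 of the tree argument.\<close>
lemma log_gauge_scale:
  fixes \<alpha> C r :: real
  assumes \<alpha>: "1 < \<alpha>" and \<gamma>: "0 < \<gamma>" "(\<alpha> + 1) powr \<gamma> = 2" and C: "0 < C"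
    and r: "0 < r" "r \<le> exp (- (\<bar>ln (6 / C) + \<alpha> * ln 2\<bar> + 2))"
  shows "log_gauge \<gamma> (2 * r) \<le> 2 * log_gauge \<gamma> (C * h1 \<alpha> (r/2) / 3)"
proof -
  define c where "c = ln (6 / C) + \<alpha> * ln 2"
  define u where "u = ln (1 / r)"
  define p where "p = C * h1 \<alpha> (r/2) / 3"
  have u: "\<bar>c\<bar> + 2 \<le> u" using r by (simp add: u_def c_def ln_div_ge_iff_le_exp)
  have p: "0 < p" using C r by (simp add: p_def h1_def)
  have "ln (2 / p) = ln (6 / C) - \<alpha> * ln (r / 2)"
    using C r by (simp add: p_def h1_def ln_div ln_mult ln_powr)
  also have "\<dots> = c + \<alpha> * u" using r by (simp add: c_def u_def ln_div algebra_simps)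
  finally have ln_p: "ln (2 / p) = c + \<alpha> * u" .
  have ln4: "ln 4 < (2::real)" using ln_mult[of 2 2] ln_2_less_1 by simp
  have "ln 4 \<le> ln (1 / r)" using u ln4 by (simp add: u_def)
  then have r4: "2 * r \<le> 1/2" using r(1) by (subst (asm) ln_le_cancel_iff) (auto simp: field_simps)
  have "u \<le> \<alpha> * u" using mult_right_mono[of 1 \<alpha> u] \<alpha> u by simp
  then have "ln 4 \<le> ln (2 / p)" using ln_p u ln4 by linarith
  then have p2: "p \<le> 1/2" using p by (subst (asm) ln_le_cancel_iff) (auto simp: field_simps)
  have "ln (2 / p) \<le> (\<alpha> + 1) * u" using ln_p u by (simp add: algebra_simps)
  then have "(\<alpha> + 1) powr (- \<gamma>) * u powr (- \<gamma>) \<le> ln (2 / p) powr (- \<gamma>)"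
    using p p2 u \<alpha> \<gamma> ln4 \<open>ln 4 \<le> ln (2 / p)\<close> by (intro powr_neg_mult_le) auto
  moreover have "(\<alpha> + 1) powr (- \<gamma>) = 1/2" using \<gamma>(2) by (simp add: powr_minus)
  moreover have "log_gauge \<gamma> (2 * r) = u powr (- \<gamma>)"
    using r(1) r4 by (simp add: log_gauge_eq u_def)
  ultimately show ?thesis using p p2 by (simp add: log_gauge_eq p_def)
qed

lemma log_powr_gap:
  fixes A C \<alpha> \<gamma> r :: real
  assumes A: "0 < A" and \<gamma>: "0 < \<gamma>" and \<alpha>: "1 \<le> \<alpha>" "4 * A powr (- 1 / \<gamma>) < \<alpha>"
    and C: "0 < C" and r: "0 < r" "r \<le> exp (- (2 * \<bar>ln (2 * C)\<bar> + 1))"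
  shows "ln (1 / (C * (2 * r powr \<alpha>))) powr (- \<gamma>) < A * ln (1 / (C * (2 * r))) powr (- \<gamma>)"
proof -
  define k where "k = ln (2 * C)"
  define u where "u = ln (1 / r)"
  have u: "2 * \<bar>k\<bar> + 1 \<le> u" using r by (simp add: u_def k_def ln_div_ge_iff_le_exp)
  have ln_r: "ln (1 / (C * (2 * r))) = u - k" and ln_r\<alpha>: "ln (1 / (C * (2 * r powr \<alpha>))) = \<alpha> * u - k"
    using C r by (simp_all add: u_def k_def ln_div ln_mult ln_powr algebra_simps)
  have "u \<le> \<alpha> * u" using mult_right_mono[of 1 \<alpha> u] \<alpha> u by simp
  have "\<alpha> / 4 * (u - k) \<le> \<alpha> / 4 * (2 * u)" using u \<alpha> by (intro mult_left_mono) auto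
  also have "\<dots> \<le> \<alpha> * u - k" using \<open>u \<le> \<alpha> * u\<close> u by linarith
  finally have "\<alpha> / 4 * (u - k) \<le> \<alpha> * u - k" .
  then have "(\<alpha> * u - k) powr (- \<gamma>) \<le> (\<alpha> / 4) powr (- \<gamma>) * (u - k) powr (- \<gamma>)"
    using u \<alpha> \<gamma> by (intro powr_neg_le_mult) auto
  also have "\<dots> < A * (u - k) powr (- \<gamma>)"
  proof (rule mult_strict_right_mono)
    have "(\<alpha> / 4) powr (- \<gamma>) < (A powr (- 1 / \<gamma>)) powr (- \<gamma>)"
      using A \<alpha> \<gamma> by (intro powr_less_mono2_neg) auto
    then show "(\<alpha> / 4) powr (- \<gamma>) < A" using A \<gamma> by (simp add: powr_powr)
    show "0 < (u - k) powr (- \<gamma>)" using u by simp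
  qed
  finally show ?thesis by (simp only: ln_r ln_r\<alpha>)
qed

lemma mono_on_h1: "0 \<le> \<alpha> \<Longrightarrow> mono_on {0..} (h1 \<alpha>)"
  unfolding h1_def by (intro mono_onI powr_mono2) auto

lemma h1_le: "1 \<le> \<alpha> \<Longrightarrow> 0 \<le> r \<Longrightarrow> r \<le> 1 \<Longrightarrow> h1 \<alpha> r \<le> r"
  unfolding h1_def by (cases "r = 0") (auto intro: powr_le_one_le)

section \<open>The gauge \<open>exp (- \<eta> log (2/t) / log log (4/t))\<close>\<close>

definition loglog_exponent :: "real \<Rightarrow> real" where
  "loglog_exponent v = v / ln (v + ln 2)"

lemma loglog_exponent_ln: "0 < t \<Longrightarrow> loglog_exponent (ln (2 / t)) = ln (2 / t) / ln (ln (4 / t))"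
  unfolding loglog_exponent_def using ln_mult[of "2 / t" 2] by simp

lemma mult_ln_increment_le:
  fixes x y :: real
  assumes "0 \<le> y" "y \<le> x"
  shows "y * (ln (x + ln 2) - ln (y + ln 2)) \<le> x - y"
proof -
  have pos: "0 < y + ln 2" using assms(1) by (simp add: add_nonneg_pos)
  then have "ln ((x + ln 2) / (y + ln 2)) \<le> (x + ln 2) / (y + ln 2) - 1"
    using assms by (intro ln_le_minus_one) auto
  moreover have "(x + ln 2) / (y + ln 2) - 1 = (x - y) / (y + ln 2)"
    using pos by (simp add: field_simps)
  ultimately have "ln (x + ln 2) - ln (y + ln 2) \<le> (x - y) / (y + ln 2)"
    using pos assms by (simp add: ln_div)
  then have "y * (ln (x + ln 2) - ln (y + ln 2)) \<le> y * ((x - y) / (y + ln 2))"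
    using assms(1) by (rule mult_left_mono)
  also have "\<dots> \<le> x - y"
    using pos assms mult_right_mono[of y "y + ln 2" "x - y"] by (simp add: divide_le_eq mult.commute)
  finally show ?thesis .
qed

lemma loglog_exponent_diff_le:
  assumes "0 \<le> y" "y \<le> x" "0 < ln (y + ln 2)"
  shows "loglog_exponent x - loglog_exponent y \<le> (x - y) / ln (y + ln 2)"
proof -
  have "ln (y + ln 2) \<le> ln (x + ln 2)" using assms by (subst ln_le_cancel_iff) (auto simp: add_nonneg_pos)
  then have "x / ln (x + ln 2) \<le> x / ln (y + ln 2)"
    using assms by (intro divide_left_mono) auto
  then show ?thesis unfolding loglog_exponent_def by (simp add: diff_divide_distrib)
qed

lemma loglog_exponent_diff_ge:
  assumes "0 \<le> y" "y \<le> x" "2 \<le> ln (y + ln 2)"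
  shows "(x - y) / (2 * ln (x + ln 2)) \<le> loglog_exponent x - loglog_exponent y"
proof -
  define a where "a = ln (y + ln 2)"
  define b where "b = ln (x + ln 2)"
  have ab: "2 \<le> a" "a \<le> b" using assms by (auto simp: a_def b_def add_nonneg_pos)
  have yb: "y * (b - a) \<le> x - y" unfolding a_def b_def using assms(1,2) by (rule mult_ln_increment_le)
  have "(x - y) / (a * b) \<le> (x - y) / (2 * b)"
    using ab assms by (intro divide_left_mono mult_right_mono) auto
  moreover have "(x - y) / (2 * b) = (x - y) / b - (x - y) / (2 * b)" using ab by simp
  ultimately have "(x - y) / (2 * b) \<le> (x - y) / b - (x - y) / (a * b)" by linarith
  also have "\<dots> \<le> (x - y) / b - y * (b - a) / (a * b)"
    using yb ab by (simp add: divide_right_mono)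
  also have "\<dots> = x / b - y / a" using ab by (simp add: field_simps)
  finally show ?thesis by (simp add: loglog_exponent_def a_def b_def)
qed

lemma two_le_ln: "9 \<le> x \<Longrightarrow> 2 \<le> ln (x::real)"
proof -
  assume x: "9 \<le> x"
  have "exp 2 = exp 1 * exp (1::real)" by (simp flip: exp_add)
  also have "\<dots> \<le> 3 * 3" using exp_le by (intro mult_mono) auto
  finally have "exp 2 \<le> x" using x by simp
  then have "ln (exp 2) \<le> ln x" using x by (subst ln_le_cancel_iff) auto
  then show ?thesis by simp
qed

lemma two_le_ln_add_ln2: "9 \<le> y \<Longrightarrow> 2 \<le> ln (y + ln (2::real))"
  by (rule two_le_ln) (simp add: add_increasing2)

lemma loglog_exponent_mono:
  assumes "9 \<le> y" "y \<le> x"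
  shows "loglog_exponent y \<le> loglog_exponent x"
proof -
  have "0 \<le> (x - y) / (2 * ln (x + ln 2))"
    using assms two_le_ln_add_ln2[of x] by (intro divide_nonneg_pos) auto
  also have "\<dots> \<le> loglog_exponent x - loglog_exponent y"
    using assms by (intro loglog_exponent_diff_ge two_le_ln_add_ln2) auto
  finally show ?thesis by simp
qed

text \<open>The truncation keeps \<open>ln (2/t) \<ge> 9\<close>, the range of \<open>loglog_exponent_mono\<close>.\<close>
definition loglog_gauge :: "real \<Rightarrow> real \<Rightarrow> real" where
  "loglog_gauge \<eta> t = exp (- \<eta> * loglog_exponent (ln (2 / min t (2 * exp (- 9)))))"

lemma loglog_gauge_eq:
  "0 < t \<Longrightarrow> t \<le> 2 * exp (- 9) \<Longrightarrow> loglog_gauge \<eta> t = exp (- \<eta> * loglog_exponent (ln (2 / t)))"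
  by (simp add: loglog_gauge_def)

lemma gauge_fun_loglog_gauge:
  assumes "0 < \<eta>"
  shows "gauge_fun (loglog_gauge \<eta>)"
  unfolding gauge_fun_def
proof (intro conjI allI impI mono_onI)
  fix x y :: real assume "x \<in> {0<..}" "x \<le> y"
  define mx where "mx = min x (2 * exp (- 9))"
  define my where "my = min y (2 * exp (- 9))"
  have m: "0 < mx" "mx \<le> my" "my \<le> 2 * exp (- 9)"
    using \<open>x \<in> {0<..}\<close> \<open>x \<le> y\<close> by (auto simp: mx_def my_def)
  have "ln (2 / my) \<le> ln (2 / mx)" using m by (subst ln_le_cancel_iff) (auto intro!: divide_left_mono)
  moreover have "9 \<le> ln (2 / my)" using m by (simp add: ln_div_ge_iff_le_exp)
  ultimately have "loglog_exponent (ln (2 / my)) \<le> loglog_exponent (ln (2 / mx))"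
    by (intro loglog_exponent_mono)
  then show "loglog_gauge \<eta> x \<le> loglog_gauge \<eta> y"
    using assms by (simp add: loglog_gauge_def mx_def my_def mult_left_mono)
next
  show "0 < loglog_gauge \<eta> t" for t by (simp add: loglog_gauge_def)
next
  have "filterlim (\<lambda>t::real. ln (2 / t) / ln (ln (4 / t))) at_top (at_right 0)" by real_asymp
  then have "filterlim (\<lambda>t::real. - \<eta> * (ln (2 / t) / ln (ln (4 / t)))) at_bot (at_right 0)"
    using assms by (intro filterlim_tendsto_neg_mult_at_bot[OF tendsto_const]) auto
  then have "((\<lambda>t. exp (- \<eta> * (ln (2 / t) / ln (ln (4 / t))))) \<longlongrightarrow> 0) (at_right 0)"
    by (rule filterlim_compose[OF exp_at_bot])
  moreover have "eventually (\<lambda>t::real. t < 2 * exp (- 9)) (at_right 0)"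
    unfolding eventually_at_right_field by (intro exI[of _ "2 * exp (- 9)"]) auto
  with eventually_at_right_less[of "0::real"]
  have "eventually (\<lambda>t. exp (- \<eta> * (ln (2 / t) / ln (ln (4 / t)))) = loglog_gauge \<eta> t) (at_right 0)"
    by eventually_elim (simp add: loglog_gauge_eq loglog_exponent_ln)
  ultimately show "(loglog_gauge \<eta> \<longlongrightarrow> 0) (at_right 0)"
    by (rule Lim_transform_eventually)
qed

lemma loglog_gauge_doubling:
  assumes "0 \<le> \<eta>" "0 < t" "t \<le> exp (- 9)"
  shows "loglog_gauge \<eta> (2 * t) \<le> 2 powr \<eta> * loglog_gauge \<eta> t"
proof -
  define x where "x = ln (2 / t)"
  define y where "y = ln (1 / t)"
  have y: "9 \<le> y" using assms by (simp add: y_def ln_div_ge_iff_le_exp)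
  have xy: "x = y + ln 2" using assms by (simp add: x_def y_def ln_div)
  have "1 \<le> ln (y + ln 2)" using two_le_ln_add_ln2[OF y] by simp
  then have "loglog_exponent x - loglog_exponent y \<le> ln 2 / ln (y + ln 2)"
    using loglog_exponent_diff_le[of y x] y xy by simp
  also have "\<dots> \<le> ln 2 / 1" using \<open>1 \<le> ln (y + ln 2)\<close> by (intro divide_left_mono) auto
  finally have "loglog_exponent x - loglog_exponent y \<le> ln 2" by simp
  then have "\<eta> * (loglog_exponent x - loglog_exponent y) \<le> \<eta> * ln 2"
    using assms(1) by (rule mult_left_mono)
  then have "exp (- \<eta> * loglog_exponent y) \<le> exp (\<eta> * ln 2 + - \<eta> * loglog_exponent x)"
    by (simp add: algebra_simps)
  also have "\<dots> = exp (\<eta> * ln 2) * exp (- \<eta> * loglog_exponent x)" by (rule exp_add)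
  finally have "exp (- \<eta> * loglog_exponent y) \<le> exp (\<eta> * ln 2) * exp (- \<eta> * loglog_exponent x)" .
  moreover have "exp (\<eta> * ln 2) = 2 powr \<eta>" by (simp add: powr_def mult.commute)
  moreover have "t \<le> 2 * exp (- 9)" "2 * t \<le> 2 * exp (- 9)" using assms by auto
  ultimately show ?thesis using assms by (simp add: loglog_gauge_eq x_def y_def)
qed

lemma ln_div_h2_half:
  fixes C r \<beta> :: real
  assumes "0 < C" "0 < r" "r < 2"
  shows "ln (2 / (C * h2 \<beta> (r/2) / 3)) = ln (1 / r) + ln (12 / C) + \<beta> * ln (ln (2 / r))"
proof -
  have pos: "0 < ln (2 / r)" using assms by (simp add: ln_div)
  then have "2 / (C * h2 \<beta> (r/2) / 3) = (12 / C) * (1 / r) * ln (2 / r) powr \<beta>"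
    using assms by (simp add: h2_def powr_minus field_simps)
  then have "ln (2 / (C * h2 \<beta> (r/2) / 3)) = ln ((12 / C) * (1 / r)) + ln (ln (2 / r) powr \<beta>)"
    using assms pos by (simp only:) (rule ln_mult_pos; simp)
  also have "ln ((12 / C) * (1 / r)) = ln (12 / C) + ln (1 / r)"
    using assms by (intro ln_mult_pos) simp_all
  also have "ln (ln (2 / r) powr \<beta>) = \<beta> * ln (ln (2 / r))" using pos by (simp add: ln_powr)
  finally show ?thesis by simp
qed

lemma loglog_exponent_log_shift_le:
  fixes u c \<beta> :: real
  assumes u: "9 \<le> u" and c: "\<bar>c\<bar> + 1 \<le> ln (u + ln 2)" "\<bar>c\<bar> \<le> \<beta> * ln (u + ln 2)"
  shows "loglog_exponent (u + c + \<beta> * ln (u + ln 2)) \<le> loglog_exponent u + (1 + \<beta>)"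
proof -
  define D where "D = ln (u + ln 2)"
  have D: "0 < D" "c \<le> D" using c by (auto simp: D_def)
  have "loglog_exponent (u + c + \<beta> * D) - loglog_exponent u \<le> (c + \<beta> * D) / D"
    using loglog_exponent_diff_le[of u "u + c + \<beta> * D"] u c D by (simp add: D_def)
  also have "\<dots> = c / D + \<beta>" using D by (simp add: field_simps)
  also have "\<dots> \<le> 1 + \<beta>" using D by (simp add: divide_le_eq)
  finally show ?thesis by (simp add: D_def)
qed

lemma loglog_gauge_scale:
  fixes \<beta> \<eta> C r :: real
  assumes \<beta>: "0 < \<beta>" and \<eta>: "0 \<le> \<eta>" "\<eta> * (1 + \<beta>) \<le> ln 2" and C: "0 < C"
    and r: "0 < r" "r \<le> exp (- exp (\<bar>ln (12 / C)\<bar> + \<bar>ln (12 / C)\<bar> / \<beta> + 9))"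
  shows "loglog_gauge \<eta> (2 * r) \<le> 2 * loglog_gauge \<eta> (C * h2 \<beta> (r/2) / 3)"
proof -
  define c where "c = ln (12 / C)"
  define u where "u = ln (1 / r)"
  define p where "p = C * h2 \<beta> (r/2) / 3"
  have u: "exp (\<bar>c\<bar> + \<bar>c\<bar> / \<beta> + 9) \<le> u"
    using r by (simp add: u_def c_def ln_div_ge_iff_le_exp)
  have c\<beta>: "0 \<le> \<bar>c\<bar> / \<beta>" using \<beta> by simp
  have "\<bar>c\<bar> + \<bar>c\<bar> / \<beta> + 9 < exp (\<bar>c\<bar> + \<bar>c\<bar> / \<beta> + 9)" by (rule exp_gt_self)
  then have u9: "9 \<le> u" using u c\<beta> by linarith
  have "exp (\<bar>c\<bar> + \<bar>c\<bar> / \<beta> + 9) \<le> u + ln 2" using u by (simp add: add_increasing2)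
  then have D: "\<bar>c\<bar> + \<bar>c\<bar> / \<beta> + 9 \<le> ln (u + ln 2)"
    using u9 by (subst ln_ge_iff) (auto simp: add_pos_nonneg)
  have "\<beta> * (\<bar>c\<bar> / \<beta>) \<le> \<beta> * ln (u + ln 2)" using D c\<beta> \<beta> by (intro mult_left_mono) auto
  then have c: "\<bar>c\<bar> + 1 \<le> ln (u + ln 2)" "\<bar>c\<bar> \<le> \<beta> * ln (u + ln 2)"
    using D c\<beta> \<beta> by (linarith, simp)
  have "r \<le> exp (- 9)" using u9 r by (simp add: u_def ln_div_ge_iff_le_exp)
  moreover have "exp (- 9) < (1::real)" by simp
  ultimately have r2: "r < 2" by linarith
  have ln_p: "ln (2 / p) = u + c + \<beta> * ln (u + ln 2)"
    using ln_div_h2_half[OF C r(1) r2, of \<beta>] r by (simp add: p_def u_def c_def ln_div)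
  have "\<eta> * (loglog_exponent (ln (2 / p)) - loglog_exponent u) \<le> \<eta> * (1 + \<beta>)"
    using loglog_exponent_log_shift_le[OF u9 c] \<eta>(1) by (intro mult_left_mono) (simp_all add: ln_p)
  then have "exp (- \<eta> * loglog_exponent u) \<le> exp (ln 2 + - \<eta> * loglog_exponent (ln (2 / p)))"
    using \<eta>(2) by (simp add: algebra_simps)
  also have "\<dots> = 2 * exp (- \<eta> * loglog_exponent (ln (2 / p)))" unfolding exp_add by simp
  finally have *: "exp (- \<eta> * loglog_exponent u) \<le> 2 * exp (- \<eta> * loglog_exponent (ln (2 / p)))" .
  have "0 < p" using C r r2 by (simp add: p_def h2_def ln_div)
  moreover have "9 \<le> ln (2 / p)" using ln_p u9 c by linarith
  ultimately have "p \<le> 2 * exp (- 9)" by (simp add: ln_div_ge_iff_le_exp[symmetric])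
  moreover have "2 * r \<le> 2 * exp (- 9)" using \<open>r \<le> exp (- 9)\<close> by simp
  ultimately show ?thesis using * r \<open>0 < p\<close> by (simp add: loglog_gauge_eq u_def p_def)
qed

lemma loglog_exponent_log_shift_ge:
  fixes \<beta> L :: real
  assumes \<beta>: "0 \<le> \<beta>" and L: "16 * \<beta>\<^sup>2 + 16 \<le> L"
  shows "loglog_exponent L + \<beta> / 4 \<le> loglog_exponent (L + \<beta> * ln L)"
proof -
  have L16: "16 \<le> L" using L by (smt (verit) zero_le_power2)
  have L0: "0 \<le> L" using L16 by linarith
  have lnL: "ln 2 \<le> ln L" "0 < ln L" using L16 by auto
  have "4 * \<beta> \<le> sqrt L" using L \<beta> by (intro real_le_rsqrt) (simp add: power_mult_distrib)
  have "ln L = 2 * ln (sqrt L)" using L16 by (simp add: ln_sqrt)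
  also have "\<dots> \<le> 2 * sqrt L" using ln_le_minus_one[of "sqrt L"] L16 by simp
  finally have "\<beta> * ln L \<le> (2 * \<beta>) * sqrt L" using \<beta> mult_left_mono by fastforce
  also have "\<dots> \<le> (sqrt L / 2) * sqrt L"
    using \<open>4 * \<beta> \<le> sqrt L\<close> L0 by (intro mult_right_mono) auto
  also have "\<dots> = L / 2" using L0 by simp
  finally have "L + \<beta> * ln L + ln 2 \<le> 2 * L" using L16 ln_2_less_1 by linarith
  moreover have "0 \<le> \<beta> * ln L" using \<beta> lnL by simp
  ultimately have "ln (L + \<beta> * ln L + ln 2) \<le> ln (2 * L)"
    using L16 by (subst ln_le_cancel_iff) (auto simp: add_pos_nonneg)
  also have "\<dots> \<le> 2 * ln L" using L16 lnL by (simp add: ln_mult)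
  finally have "2 * ln (L + \<beta> * ln L + ln 2) \<le> 4 * ln L" by simp
  moreover have "2 \<le> ln (L + \<beta> * ln L + ln 2)"
    using L16 \<open>0 \<le> \<beta> * ln L\<close> by (intro two_le_ln_add_ln2) simp
  ultimately have "\<beta> * ln L / (4 * ln L) \<le> \<beta> * ln L / (2 * ln (L + \<beta> * ln L + ln 2))"
    using \<open>0 \<le> \<beta> * ln L\<close> lnL by (intro divide_left_mono) auto
  then have "\<beta> / 4 \<le> \<beta> * ln L / (2 * ln (L + \<beta> * ln L + ln 2))" using lnL by simp
  also have "\<dots> \<le> loglog_exponent (L + \<beta> * ln L) - loglog_exponent L"
    using loglog_exponent_diff_ge[of L "L + \<beta> * ln L"] two_le_ln_add_ln2[of L] L16
      \<open>0 \<le> \<beta> * ln L\<close> by simp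
  finally show ?thesis by simp
qed

lemma exp_loglog_exponent_gap:
  fixes A \<eta> \<beta> L :: real
  assumes \<eta>: "0 \<le> \<eta>" and \<beta>: "0 \<le> \<beta>" and A: "exp (- (\<eta> * \<beta> / 4)) < A"
    and L: "16 * \<beta>\<^sup>2 + 16 \<le> L"
  shows "exp (- \<eta> * loglog_exponent (L + \<beta> * ln L)) < A * exp (- \<eta> * loglog_exponent L)"
proof -
  have "\<eta> * (loglog_exponent L + \<beta> / 4) \<le> \<eta> * loglog_exponent (L + \<beta> * ln L)"
    using loglog_exponent_log_shift_ge[OF \<beta> L] \<eta> by (rule mult_left_mono)
  then have "exp (- \<eta> * loglog_exponent (L + \<beta> * ln L)) \<le> exp (- (\<eta> * \<beta> / 4) + - \<eta> * loglog_exponent L)"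
    by (simp add: algebra_simps)
  also have "\<dots> = exp (- (\<eta> * \<beta> / 4)) * exp (- \<eta> * loglog_exponent L)" by (rule exp_add)
  also have "\<dots> < A * exp (- \<eta> * loglog_exponent L)" using A by (intro mult_strict_right_mono) auto
  finally show ?thesis .
qed

lemma mono_on_h2: "0 \<le> \<beta> \<Longrightarrow> mono_on {0..<1} (h2 \<beta>)"
proof (intro mono_onI)
  fix x y :: real assume "0 \<le> \<beta>" "x \<in> {0..<1}" "y \<in> {0..<1}" "x \<le> y"
  show "h2 \<beta> x \<le> h2 \<beta> y"
  proof (cases "x = 0")
    case True
    then show ?thesis using \<open>y \<in> {0..<1}\<close> by (simp add: h2_def)
  next
    case False
    then have xy: "0 < x" "x \<le> y" "y < 1" using \<open>x \<in> {0..<1}\<close> \<open>y \<in> {0..<1}\<close> \<open>x \<le> y\<close> by auto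
    then have "0 < ln (1 / y)" "ln (1 / y) \<le> ln (1 / x)"
      by (auto simp: ln_div intro!: ln_gt_zero)
    then have "ln (1 / x) powr (- \<beta>) \<le> ln (1 / y) powr (- \<beta>)"
      using \<open>0 \<le> \<beta>\<close> by (intro powr_mono2') auto
    then show ?thesis using xy by (simp add: h2_def mult_mono)
  qed
qed

lemma h2_le: "0 \<le> \<beta> \<Longrightarrow> 0 \<le> r \<Longrightarrow> r \<le> exp (- 1) \<Longrightarrow> h2 \<beta> r \<le> r"
proof (cases "r = 0")
  case False
  assume "0 \<le> \<beta>" "0 \<le> r" "r \<le> exp (- 1)"
  then have "1 \<le> ln (1 / r)" using False by (simp add: ln_div_ge_iff_le_exp)
  then have "ln (1 / r) powr (- \<beta>) \<le> 1"
    using \<open>0 \<le> \<beta>\<close> powr_mono2'[of "- \<beta>" 1 "ln (1 / r)"] by simp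
  then show ?thesis using \<open>0 \<le> r\<close> by (simp add: h2_def mult_left_le)
qed (simp add: h2_def)


lemma condU1_imp_hausdorff_content_ge:
  fixes E :: "complex set"
  assumes "closed E" and \<alpha>: "1 < \<alpha>" and "condU1 \<alpha> E"
  shows "\<exists>A>0. \<exists>C>0. \<exists>r0>0. \<exists>\<gamma>>0. \<exists>g. gauge_fun g \<and>
           (\<forall>t\<in>{0<..<2*r0}. g t = (ln (1 / (C * t))) powr (- \<gamma>)) \<and>
           (\<forall>a\<in>E. \<forall>r\<in>{0<..<r0}.
              hausdorff_content g (E \<inter> cball a r) \<ge> ennreal (A * g (2 * r)))"
proof -
  obtain C0 r0 where C0: "0 < C0" and "0 < r0" and perf: "h_uniformly_perfect (\<lambda>r. C0 * h1 \<alpha> r) r0 E"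
    using assms(3) unfolding condU1_def by blast
  define \<gamma> where "\<gamma> = ln 2 / ln (\<alpha> + 1)"
  have "0 < ln (\<alpha> + 1)" using \<alpha> by simp
  then have \<gamma>: "0 < \<gamma>" "(\<alpha> + 1) powr \<gamma> = 2" using \<alpha> by (simp_all add: \<gamma>_def powr_def)
  define R where "R = min r0 (min (1/8) (exp (- (\<bar>ln (6 / C0) + \<alpha> * ln 2\<bar> + 2))))"
  have R: "0 < R" "R \<le> r0" "R \<le> 1/8" "R \<le> exp (- (\<bar>ln (6 / C0) + \<alpha> * ln 2\<bar> + 2))"
    using \<open>0 < r0\<close> by (auto simp: R_def)
  have bound: "ennreal (log_gauge \<gamma> (2 * r) / (2 * 2 powr \<gamma>)) \<le> hausdorff_content (log_gauge \<gamma>) (E \<inter> cball a r)"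
    if "a \<in> E" "0 < r" "r < R" for a r
  proof (rule uniformly_perfect_imp_hausdorff_content_ge[OF \<open>closed E\<close>
        h_uniformly_perfect_smaller_radius[OF perf \<open>R \<le> r0\<close>] _ gauge_fun_log_gauge[OF \<gamma>(1)] _ _ that])
    show "0 < C0 * h1 \<alpha> s" if "0 < s" for s using C0 that by (simp add: h1_def)
    show "log_gauge \<gamma> (2 * r) \<le> 2 * log_gauge \<gamma> (C0 * h1 \<alpha> (r / 2) / 3)" if "0 < r" "r < R" for r
      using log_gauge_scale[OF \<alpha> \<gamma> C0, of r] that R by simp
    show "log_gauge \<gamma> (2 * t) \<le> 2 powr \<gamma> * log_gauge \<gamma> t" if "0 < t" "t < 2 * R" for t
      using log_gauge_doubling[of \<gamma> t] \<gamma> that R by simp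
  qed
  have "\<forall>t\<in>{0<..<2*R}. log_gauge \<gamma> t = ln (1 / (1/2 * t)) powr (- \<gamma>)"
    using R by (simp add: log_gauge_eq)
  moreover have "\<forall>a\<in>E. \<forall>r\<in>{0<..<R}. hausdorff_content (log_gauge \<gamma>) (E \<inter> cball a r)
      \<ge> ennreal (1 / (2 * 2 powr \<gamma>) * log_gauge \<gamma> (2 * r))"
    using bound by simp
  moreover have "0 < 1 / (2 * 2 powr \<gamma>)" "0 < (1/2::real)" by simp_all
  ultimately show ?thesis using gauge_fun_log_gauge[OF \<gamma>(1)] \<gamma>(1) R(1) by blast
qed

lemma hausdorff_content_ge_imp_condU1:
  fixes E :: "complex set" and g :: "real \<Rightarrow> real"
  assumes "closed E" and A: "0 < A" and C: "0 < C" and "0 < r0" and \<gamma>: "0 < \<gamma>" and g: "gauge_fun g"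
    and g_eq: "\<forall>t\<in>{0<..<2*r0}. g t = ln (1 / (C * t)) powr (- \<gamma>)"
    and bound: "\<forall>a\<in>E. \<forall>r\<in>{0<..<r0}. hausdorff_content g (E \<inter> cball a r) \<ge> ennreal (A * g (2 * r))"
  shows "\<exists>\<alpha>>1. condU1 \<alpha> E"
proof -
  define \<alpha> where "\<alpha> = 4 * A powr (- 1 / \<gamma>) + 2"
  have "0 \<le> A powr (- 1 / \<gamma>)" by simp
  then have \<alpha>: "1 < \<alpha>" "4 * A powr (- 1 / \<gamma>) < \<alpha>" unfolding \<alpha>_def by linarith+
  define R where "R = min r0 (exp (- (2 * \<bar>ln (2 * C)\<bar> + 1)))"
  have R: "0 < R" "R \<le> r0" "R \<le> exp (- (2 * \<bar>ln (2 * C)\<bar> + 1))" using \<open>0 < r0\<close> by (auto simp: R_def)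
  have "exp (- (2 * \<bar>ln (2 * C)\<bar> + 1)) \<le> 1" by simp
  then have "R \<le> 1" using R(3) by linarith
  have "h_uniformly_perfect (\<lambda>r. 1 * h1 \<alpha> r) R E"
  proof (rule hausdorff_content_ge_imp_uniformly_perfect[OF \<open>closed E\<close> g])
    show "ennreal (A * g (2 * r)) \<le> hausdorff_content g (E \<inter> cball a r)"
      if "a \<in> E" "0 < r" "r < R" for a r
      using bound that R(2) by simp
    show "mono_on {0..<R} (\<lambda>r. 1 * h1 \<alpha> r)"
    proof -
      have "mono_on {0..} (h1 \<alpha>)" using \<alpha> by (intro mono_on_h1) simp
      moreover have "{0..<R} \<subseteq> {0..}" by auto
      ultimately show ?thesis by (simp add: mono_on_subset)
    qed
    show "1 * h1 \<alpha> r \<le> r" if "0 \<le> r" "r < R" for r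
      using h1_le[of \<alpha> r] \<alpha> that \<open>R \<le> 1\<close> by simp
    show "g (2 * (1 * h1 \<alpha> r)) < A * g (2 * r)" if "0 < r" "r < R" for r
    proof -
      have "r powr \<alpha> \<le> r" using h1_le[of \<alpha> r] \<alpha> that \<open>R \<le> 1\<close> by (simp add: h1_def)
      then have "g (2 * r powr \<alpha>) = ln (1 / (C * (2 * r powr \<alpha>))) powr (- \<gamma>)"
        "g (2 * r) = ln (1 / (C * (2 * r))) powr (- \<gamma>)"
        using g_eq that R by auto
      then show ?thesis
        using log_powr_gap[OF A \<gamma> _ \<alpha>(2) C \<open>0 < r\<close>] \<alpha> that R by (simp add: h1_def)
    qed
  qed
  then show ?thesis using \<alpha>(1) R(1) zero_less_one unfolding condU1_def by blast
qed

lemma condU2_imp_hausdorff_content_ge: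
  fixes E :: "complex set"
  assumes "closed E" and \<beta>: "0 < \<beta>" and "condU2 \<beta> E"
  shows "\<exists>A>0. \<exists>r0>0. \<exists>\<eta>>0. \<exists>g. gauge_fun g \<and>
           (\<forall>t\<in>{0<..<2*r0}. g t = exp (- \<eta> * ln (2 / t) / ln (ln (4 / t)))) \<and>
           (\<forall>a\<in>E. \<forall>r\<in>{0<..<r0}.
              hausdorff_content g (E \<inter> cball a r) \<ge> ennreal (A * g (2 * r)))"
proof -
  obtain C0 r0 where C0: "0 < C0" and "0 < r0" and perf: "h_uniformly_perfect (\<lambda>r. C0 * h2 \<beta> r) r0 E"
    using assms(3) unfolding condU2_def by blast
  define \<eta> where "\<eta> = ln 2 / (1 + \<beta>)"
  have \<eta>: "0 < \<eta>" "\<eta> * (1 + \<beta>) \<le> ln 2" using \<beta> by (simp_all add: \<eta>_def)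
  define R where
    "R = min r0 (min (exp (- 9) / 2) (exp (- exp (\<bar>ln (12 / C0)\<bar> + \<bar>ln (12 / C0)\<bar> / \<beta> + 9))))"
  have R: "0 < R" "R \<le> r0" "R \<le> exp (- 9) / 2"
    "R \<le> exp (- exp (\<bar>ln (12 / C0)\<bar> + \<bar>ln (12 / C0)\<bar> / \<beta> + 9))"
    using \<open>0 < r0\<close> by (auto simp: R_def)
  have "exp (- 9) < (1::real)" by simp
  then have R1: "R < 1" using R(3) by linarith
  have bound: "ennreal (loglog_gauge \<eta> (2 * r) / (2 * 2 powr \<eta>))
      \<le> hausdorff_content (loglog_gauge \<eta>) (E \<inter> cball a r)"
    if "a \<in> E" "0 < r" "r < R" for a r
  proof (rule uniformly_perfect_imp_hausdorff_content_ge[OF \<open>closed E\<close>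
        h_uniformly_perfect_smaller_radius[OF perf \<open>R \<le> r0\<close>] _ gauge_fun_loglog_gauge[OF \<eta>(1)] _ _ that])
    show "0 < C0 * h2 \<beta> s" if "0 < s" "s < R" for s
      using C0 that R1 by (simp add: h2_def ln_div)
    show "loglog_gauge \<eta> (2 * r) \<le> 2 * loglog_gauge \<eta> (C0 * h2 \<beta> (r / 2) / 3)"
      if "0 < r" "r < R" for r
      using loglog_gauge_scale[OF \<beta> less_imp_le[OF \<eta>(1)] \<eta>(2) C0, of r] that R by simp
    show "loglog_gauge \<eta> (2 * t) \<le> 2 powr \<eta> * loglog_gauge \<eta> t" if "0 < t" "t < 2 * R" for t
      using loglog_gauge_doubling[of \<eta> t] \<eta> that R by simp
  qed
  have "\<forall>t\<in>{0<..<2*R}. loglog_gauge \<eta> t = exp (- \<eta> * ln (2 / t) / ln (ln (4 / t)))"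
    using R by (simp add: loglog_gauge_eq loglog_exponent_ln)
  moreover have "\<forall>a\<in>E. \<forall>r\<in>{0<..<R}. hausdorff_content (loglog_gauge \<eta>) (E \<inter> cball a r)
      \<ge> ennreal (1 / (2 * 2 powr \<eta>) * loglog_gauge \<eta> (2 * r))"
    using bound by simp
  moreover have "0 < 1 / (2 * 2 powr \<eta>)" by simp
  ultimately show ?thesis using gauge_fun_loglog_gauge[OF \<eta>(1)] \<eta>(1) R(1) by blast
qed

lemma hausdorff_content_ge_imp_condU2:
  fixes E :: "complex set" and g :: "real \<Rightarrow> real"
  assumes "closed E" and A: "0 < A" and "0 < r0" and \<eta>: "0 < \<eta>" and g: "gauge_fun g"
    and g_eq: "\<forall>t\<in>{0<..<2*r0}. g t = exp (- \<eta> * ln (2 / t) / ln (ln (4 / t)))"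
    and bound: "\<forall>a\<in>E. \<forall>r\<in>{0<..<r0}. hausdorff_content g (E \<inter> cball a r) \<ge> ennreal (A * g (2 * r))"
  shows "\<exists>\<beta>>0. condU2 \<beta> E"
proof -
  define \<beta> where "\<beta> = 4 * (\<bar>ln A\<bar> + 1) / \<eta>"
  have \<beta>: "0 < \<beta>" using \<eta> by (simp add: \<beta>_def)
  have "\<eta> * \<beta> / 4 = \<bar>ln A\<bar> + 1" using \<eta> by (simp add: \<beta>_def)
  then have "- (\<eta> * \<beta> / 4) < ln A" using abs_ge_minus_self[of "ln A"] by linarith
  then have "exp (- (\<eta> * \<beta> / 4)) < exp (ln A)" by simp
  then have A_gap: "exp (- (\<eta> * \<beta> / 4)) < A" using A by simp
  define R where "R = min r0 (exp (- (16 * \<beta>\<^sup>2 + 16)))"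
  have R: "0 < R" "R \<le> r0" "R \<le> exp (- (16 * \<beta>\<^sup>2 + 16))" using \<open>0 < r0\<close> by (auto simp: R_def)
  have "0 \<le> 16 * \<beta>\<^sup>2" by simp
  then have "exp (- (16 * \<beta>\<^sup>2 + 16)) \<le> exp (- 1)" by (subst exp_le_cancel_iff) linarith
  moreover have "exp (- 1) < (1::real)" by simp
  ultimately have R1: "R \<le> exp (- 1)" "R < 1" using R(3) by linarith+
  have g_loglog: "g (2 * t) = exp (- \<eta> * loglog_exponent (ln (1 / t)))" if "0 < t" "t < r0" for t
  proof -
    have "loglog_exponent (ln (2 / (2 * t))) = ln (2 / (2 * t)) / ln (ln (4 / (2 * t)))"
      using that by (intro loglog_exponent_ln) simp
    then show ?thesis using g_eq that by simp
  qed
  have "h_uniformly_perfect (\<lambda>r. 1 * h2 \<beta> r) R E"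
  proof (rule hausdorff_content_ge_imp_uniformly_perfect[OF \<open>closed E\<close> g])
    show "ennreal (A * g (2 * r)) \<le> hausdorff_content g (E \<inter> cball a r)"
      if "a \<in> E" "0 < r" "r < R" for a r
      using bound that R(2) by simp
    show "mono_on {0..<R} (\<lambda>r. 1 * h2 \<beta> r)"
    proof -
      have "mono_on {0..<1} (h2 \<beta>)" using \<beta> by (intro mono_on_h2) simp
      moreover have "{0..<R} \<subseteq> {0..<1}" using R1 by auto
      ultimately show ?thesis by (simp add: mono_on_subset)
    qed
    show "1 * h2 \<beta> r \<le> r" if "0 \<le> r" "r < R" for r
      using h2_le[of \<beta> r] \<beta> that R1 by simp
    show "g (2 * (1 * h2 \<beta> r)) < A * g (2 * r)" if r: "0 < r" "r < R" for r
    proof -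
      define L where "L = ln (1 / r)"
      have L: "16 * \<beta>\<^sup>2 + 16 \<le> L" using r R by (simp add: L_def ln_div_ge_iff_le_exp)
      then have "0 < L" by (smt (verit) zero_le_power2)
      define s where "s = h2 \<beta> r"
      have s: "0 < s" "s \<le> r" "ln (1 / s) = L + \<beta> * ln L"
        using r R1 R \<open>0 < L\<close> h2_le[of \<beta> r] \<beta>
        by (auto simp: s_def h2_def L_def ln_div ln_mult)
      have "g (2 * s) = exp (- \<eta> * loglog_exponent (L + \<beta> * ln L))"
        using g_loglog[of s] s r R by simp
      also have "\<dots> < A * exp (- \<eta> * loglog_exponent L)"
        using \<eta> \<beta> A_gap L by (intro exp_loglog_exponent_gap) auto
      also have "exp (- \<eta> * loglog_exponent L) = g (2 * r)"
        using g_loglog[of r] r R by (simp add: L_def)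
      finally show ?thesis by (simp add: s_def)
    qed
  qed
  then show ?thesis using \<beta>(1) R(1) zero_less_one unfolding condU2_def by blast
qed

theorem theorem1p4:
  fixes E :: "complex set"
  assumes "closed E"
  shows "((\<exists>\<alpha>>1. condU1 \<alpha> E) \<longleftrightarrow>
           (\<exists>A>0. \<exists>C>0. \<exists>r0>0. \<exists>\<gamma>>0. \<exists>g. gauge_fun g \<and>
              (\<forall>t\<in>{0<..<2*r0}. g t = (ln (1 / (C * t))) powr (- \<gamma>)) \<and>
              (\<forall>a\<in>E. \<forall>r\<in>{0<..<r0}.
                 hausdorff_content g (E \<inter> cball a r) \<ge> ennreal (A * g (2 * r)))))
       \<and> ((\<exists>\<beta>>0. condU2 \<beta> E) \<longleftrightarrow>
           (\<exists>A>0. \<exists>r0>0. \<exists>\<eta>>0. \<exists>g. gauge_fun g \<and>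
              (\<forall>t\<in>{0<..<2*r0}. g t = exp (- \<eta> * ln (2 / t) / ln (ln (4 / t)))) \<and>
              (\<forall>a\<in>E. \<forall>r\<in>{0<..<r0}.
                 hausdorff_content g (E \<inter> cball a r) \<ge> ennreal (A * g (2 * r)))))"
  by (intro conjI iffI; elim exE conjE;
      rule condU1_imp_hausdorff_content_ge[OF assms] hausdorff_content_ge_imp_condU1[OF assms]
        condU2_imp_hausdorff_content_ge[OF assms] hausdorff_content_ge_imp_condU2[OF assms];
      assumption)

end
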